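(* Let $X$ be a compact metric space and $F\colon X\to 2^X$ a set-valued mapping. Then $F$ has the specification property if and only if $F^{-1}$ has the specification property.
   Context: $d$ is the metric on $X$; $2^X$ is the space of nonempty closed subsets of $X$; a set-valued mapping is an upper semicontinuous $F\colon X\to 2^X$. $F^{-1}\colon X\to 2^X$ is defined by $F^{-1}(x)=\{y\in X: x\in F(y)\}$ (it is understood that the relevant maps take nonempty values, which holds when $F$ is surjective in the sense that every $y\in X$ lies in some $F(x)$; specification forces this). An orbit of $x$ under $F$ is a sequence $(x_j)_{j=0}^\infty$ with $x_0=x$, $x_{j+1}\in F(x_j)$. $F$ has the specification property if for every $\epsilon>0$ there is $M\in\mathbb{N}$ such that for any $n$, any $x^1,\dots,x^n\in X$, any integers $0\le a_1\le b_1<a_2\le\dots<a_n\le b_n$ with $a_{i+1}-b_i>M$, any orbits $(x^i_j)_{j=0}^\infty$ of the $x^i$, and any $P>M+b_n-a_1$, there is $z\in X$ with an orbit $(z_j)_{j=0}^\infty$ such that $d(z_j,x^i_j)<\epsilon$ for $1\le i\le n$, $a_i\le j\le b_i$, and $z_P=z$. The same definition applies to $F^{-1}$ with orbits taken under $F^{-1}$. *)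

theory Defs
  imports "HOL-Analysis.Analysis"
begin

definition usc_on :: "'a::metric_space set \<Rightarrow> ('a \<Rightarrow> 'a set) \<Rightarrow> bool" where
  "usc_on X F \<longleftrightarrow> (\<forall>x\<in>X. \<forall>U. open U \<and> F x \<subseteq> U \<longrightarrow>
      (\<exists>\<delta>>0. \<forall>y\<in>X. dist y x < \<delta> \<longrightarrow> F y \<subseteq> U))"

definition set_valued_map :: "'a::metric_space set \<Rightarrow> ('a \<Rightarrow> 'a set) \<Rightarrow> bool" where
  "set_valued_map X F \<longleftrightarrow>
     (\<forall>x\<in>X. F x \<noteq> {} \<and> F x \<subseteq> X \<and> closed (F x)) \<and> usc_on X F"

definition inv_map :: "'a set \<Rightarrow> ('a \<Rightarrow> 'a set) \<Rightarrow> 'a \<Rightarrow> 'a set" where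
  "inv_map X F x = {y\<in>X. x \<in> F y}"

definition is_orbit :: "('a \<Rightarrow> 'a set) \<Rightarrow> 'a \<Rightarrow> (nat \<Rightarrow> 'a) \<Rightarrow> bool" where
  "is_orbit F x xs \<longleftrightarrow> xs 0 = x \<and> (\<forall>j. xs (Suc j) \<in> F (xs j))"

text \<open>The specification property. The n points/orbits and intervals [a_i,b_i] are indexed by
  i = 0..n-1 (paper: 1..n).\<close>
definition has_specification :: "'a::metric_space set \<Rightarrow> ('a \<Rightarrow> 'a set) \<Rightarrow> bool" where
  "has_specification X F \<longleftrightarrow>
    (\<forall>\<epsilon>>0. \<exists>M::nat. \<forall>n::nat. \<forall>a b :: nat \<Rightarrow> nat. \<forall>orb :: nat \<Rightarrow> nat \<Rightarrow> 'a. \<forall>P::nat.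
       (n \<ge> 1 \<and>
        (\<forall>i<n. orb i 0 \<in> X \<and> is_orbit F (orb i 0) (orb i)) \<and>
        (\<forall>i<n. a i \<le> b i) \<and>
        (\<forall>i. Suc i < n \<longrightarrow> b i < a (Suc i) \<and> a (Suc i) - b i > M) \<and>
        P > M + b (n - 1) - a 0)
       \<longrightarrow> (\<exists>z\<in>X. \<exists>zs. is_orbit F z zs \<and>
              (\<forall>i<n. \<forall>j. a i \<le> j \<and> j \<le> b i \<longrightarrow> dist (zs j) (orb i j) < \<epsilon>) \<and>
              zs P = z))"

end

theory Submission
  imports Defs
begin

text \<open>
  Orbits of \<open>F\<inverse>\<close> are orbits of \<open>F\<close> run backwards. Given \<open>F\<inverse>\<close>-orbit segments on the
  intervals \<open>[a i, b i]\<close>, reflect time about \<open>B = b (n - 1)\<close>: the reversed segments are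
  \<open>F\<close>-orbit segments on the mirrored intervals \<open>[B - b (n - 1 - i), B - a (n - 1 - i)]\<close>, which
  have the same gaps and the same total span. Specification for \<open>F\<close> yields a \<open>P\<close>-periodic
  \<open>F\<close>-orbit shadowing them, and reading it backwards modulo \<open>P\<close> from time \<open>B\<close> gives the
  required periodic \<open>F\<inverse>\<close>-orbit. Since \<open>(F\<inverse>)\<inverse> = F\<close> for surjective \<open>F\<close>, the converse is
  the same argument.
\<close>

definition specification_instance ::
    "'a::metric_space set \<Rightarrow> ('a \<Rightarrow> 'a set) \<Rightarrow> nat \<Rightarrow> nat \<Rightarrow> (nat \<Rightarrow> nat) \<Rightarrow> (nat \<Rightarrow> nat)
      \<Rightarrow> (nat \<Rightarrow> nat \<Rightarrow> 'a) \<Rightarrow> nat \<Rightarrow> bool" where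
  "specification_instance X F M n a b orb P \<longleftrightarrow>
     n \<ge> 1 \<and>
     (\<forall>i<n. orb i 0 \<in> X \<and> is_orbit F (orb i 0) (orb i)) \<and>
     (\<forall>i<n. a i \<le> b i) \<and>
     (\<forall>i. Suc i < n \<longrightarrow> b i < a (Suc i) \<and> a (Suc i) - b i > M) \<and>
     P > M + b (n - 1) - a 0"

definition periodic_shadow ::
    "'a::metric_space set \<Rightarrow> ('a \<Rightarrow> 'a set) \<Rightarrow> real \<Rightarrow> nat \<Rightarrow> (nat \<Rightarrow> nat) \<Rightarrow> (nat \<Rightarrow> nat)
      \<Rightarrow> (nat \<Rightarrow> nat \<Rightarrow> 'a) \<Rightarrow> nat \<Rightarrow> bool" where
  "periodic_shadow X F \<epsilon> n a b orb P \<longleftrightarrow>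
     (\<exists>z\<in>X. \<exists>zs. is_orbit F z zs \<and>
        (\<forall>i<n. \<forall>j. a i \<le> j \<and> j \<le> b i \<longrightarrow> dist (zs j) (orb i j) < \<epsilon>) \<and> zs P = z)"

lemma has_specification_iff:
  "has_specification X F \<longleftrightarrow>
     (\<forall>\<epsilon>>0. \<exists>M. \<forall>n a b orb P.
        specification_instance X F M n a b orb P \<longrightarrow> periodic_shadow X F \<epsilon> n a b orb P)"
  unfolding has_specification_def specification_instance_def periodic_shadow_def ..

lemma orbit_in:
  assumes "\<forall>x\<in>X. F x \<subseteq> X" "x \<in> X" "is_orbit F x xs"
  shows "xs j \<in> X"
  using assms unfolding is_orbit_def by (induction j) auto

lemma orbit_exists:
  assumes "\<forall>x\<in>X. F x \<subseteq> X" "\<forall>x\<in>X. F x \<noteq> {}" "x \<in> X"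
  shows "\<exists>xs. is_orbit F x xs"
proof -
  define next_pt where "next_pt y = (SOME z. z \<in> F y)" for y
  have next_pt: "next_pt y \<in> F y \<and> next_pt y \<in> X" if "y \<in> X" for y
    using assms(1,2) that some_in_eq unfolding next_pt_def by blast
  have "(next_pt ^^ k) x \<in> X" for k
    using assms(3) next_pt by (induction k) auto
  then have "is_orbit F x (\<lambda>k. (next_pt ^^ k) x)"
    unfolding is_orbit_def using next_pt by simp
  then show ?thesis by blast
qed

lemma inverse_orbit_step:
  assumes "\<forall>x\<in>X. H x = {y\<in>X. x \<in> G y}" "x \<in> X" "is_orbit H x xs"
  shows "xs k \<in> G (xs (Suc k))"
proof -
  have "xs k \<in> X" using orbit_in[of X H] assms by blast
  then show ?thesis using assms(1,3) unfolding is_orbit_def by blast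
qed

lemma reversed_segment_extends_to_orbit:
  assumes "\<forall>x\<in>X. G x \<subseteq> X" "\<forall>x\<in>X. G x \<noteq> {}"
    and "xs 0 \<in> X" "\<forall>k<B. xs k \<in> G (xs (Suc k))"
  shows "\<exists>ys. is_orbit G (ys 0) ys \<and> (\<forall>j\<le>B. ys j = xs (B - j))"
proof -
  obtain ws where ws: "is_orbit G (xs 0) ws"
    using orbit_exists[OF assms(1-3)] ..
  define ys where "ys j = (if j \<le> B then xs (B - j) else ws (j - B))" for j
  have "ys (Suc j) \<in> G (ys j)" for j
  proof (cases "Suc j \<le> B")
    case True
    then have "B - j = Suc (B - Suc j)" by simp
    then show ?thesis using True assms(4) by (simp add: ys_def)
  next
    case False
    then have "Suc j - B = Suc (j - B)" "ws (Suc (j - B)) \<in> G (ws (j - B))"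
      using ws unfolding is_orbit_def by auto
    moreover have "ws 0 = xs 0" using ws unfolding is_orbit_def by simp
    ultimately show ?thesis using False by (cases "j = B") (auto simp: ys_def)
  qed
  then have "is_orbit G (ys 0) ys \<and> (\<forall>j\<le>B. ys j = xs (B - j))"
    unfolding is_orbit_def ys_def by simp
  then show ?thesis by blast
qed

lemma periodic_orbit_step:
  assumes "is_orbit G z zs" "zs P = z" "m < P"
  shows "zs (Suc m mod P) \<in> G (zs m)"
proof (cases "Suc m < P")
  case True
  then show ?thesis using assms(1) unfolding is_orbit_def by simp
next
  case False
  then have "Suc m = P" using assms(3) by simp
  then show ?thesis using assms(1,2) unfolding is_orbit_def by (metis mod_self)
qed

lemma backward_index_step:
  assumes "P > 0"
  shows "nat ((int B - int j) mod int P) = Suc (nat ((int B - int (Suc j)) mod int P)) mod P"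
proof -
  define r where "r = (int B - int (Suc j)) mod int P"
  have "r \<ge> 0" using assms unfolding r_def by simp
  have "(int B - int j) mod int P = (r + 1) mod int P"
    unfolding r_def mod_add_left_eq by simp
  also have "\<dots> = int (Suc (nat r) mod P)"
    using \<open>r \<ge> 0\<close> by (simp add: of_nat_mod add.commute)
  finally show ?thesis unfolding r_def by simp
qed

lemma periodic_orbit_reverse:
  fixes B :: nat
  assumes GX: "\<forall>x\<in>X. G x \<subseteq> X" and HG: "\<forall>x\<in>X. H x = {y\<in>X. x \<in> G y}"
    and z: "z \<in> X" "is_orbit G z zs" "zs P = z" and "P > 0"
  defines "u \<equiv> \<lambda>j. zs (nat ((int B - int j) mod int P))"
  shows "u 0 \<in> X" "is_orbit H (u 0) u" "u P = u 0"
    and "\<And>j. j \<le> B \<Longrightarrow> B - j < P \<Longrightarrow> u j = zs (B - j)"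
proof -
  have zs_in: "zs k \<in> X" for k using orbit_in[OF GX z(1,2)] .
  then show "u 0 \<in> X" unfolding u_def .
  have "u j \<in> G (u (Suc j))" for j
  proof -
    have "nat ((int B - int (Suc j)) mod int P) < P"
      using \<open>P > 0\<close> by (simp add: nat_less_iff)
    from periodic_orbit_step[OF z(2,3) this] show ?thesis
      unfolding u_def backward_index_step[OF \<open>P > 0\<close>, of B j] .
  qed
  then show "is_orbit H (u 0) u"
    using HG zs_in unfolding is_orbit_def u_def by auto
  show "u P = u 0" unfolding u_def by simp
  show "u j = zs (B - j)" if "j \<le> B" "B - j < P" for j
    using that by (simp add: u_def of_nat_diff[symmetric] zmod_int del: of_nat_diff)
qed

lemma separated_intervals_mono:
  fixes a b :: "nat \<Rightarrow> nat"
  assumes "\<forall>i<n. a i \<le> b i" "\<forall>i. Suc i < n \<longrightarrow> b i < a (Suc i)"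
    and "i \<le> k" "k < n"
  shows "a i \<le> a k \<and> b i \<le> b k"
  using assms(3,4)
proof (induction k rule: dec_induct)
  case (step k)
  then have "a k \<le> b k" "b k < a (Suc k)" "a (Suc k) \<le> b (Suc k)" using assms(1,2) by auto
  with step show ?case by linarith
qed simp

lemma reflected_intervals:
  fixes a b :: "nat \<Rightarrow> nat"
  assumes "n \<ge> 1" "\<forall>i<n. a i \<le> b i"
    and sep: "\<forall>i. Suc i < n \<longrightarrow> b i < a (Suc i) \<and> a (Suc i) - b i > M"
    and a'_def: "a' = (\<lambda>i. b (n - 1) - b (n - 1 - i))"
    and b'_def: "b' = (\<lambda>i. b (n - 1) - a (n - 1 - i))"
  shows "\<forall>i<n. a' i \<le> b' i"
    and "\<forall>i. Suc i < n \<longrightarrow> b' i < a' (Suc i) \<and> a' (Suc i) - b' i > M"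
    and "M + b' (n - 1) - a' 0 = M + b (n - 1) - a 0"
proof -
  have mono: "a i \<le> a k \<and> b i \<le> b k" if "i \<le> k" "k < n" for i k
    using separated_intervals_mono[OF assms(2) _ that] sep by blast
  show "\<forall>i<n. a' i \<le> b' i" unfolding a'_def b'_def using assms(2) by (simp add: diff_le_mono2)
  show "\<forall>i. Suc i < n \<longrightarrow> b' i < a' (Suc i) \<and> a' (Suc i) - b' i > M"
  proof (intro allI impI)
    fix i assume "Suc i < n"
    define k where "k = n - 1 - i"
    have k: "k < n" "Suc (k - 1) = k" using \<open>Suc i < n\<close> by (auto simp: k_def)
    have ak: "a k \<le> b (n - 1)" using mono[of k "n - 1"] assms(2) k(1) by fastforce
    have "b (k - 1) < a k" "a k - b (k - 1) > M" using sep[rule_format, of "k - 1"] k by auto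
    with ak have "b (n - 1) - a k < b (n - 1) - b (k - 1)"
      "(b (n - 1) - b (k - 1)) - (b (n - 1) - a k) > M" by auto
    moreover have "n - 1 - Suc i = k - 1" using \<open>Suc i < n\<close> by (simp add: k_def)
    ultimately show "b' i < a' (Suc i) \<and> a' (Suc i) - b' i > M"
      unfolding a'_def b'_def k_def[symmetric] by simp
  qed
  have "a 0 \<le> b (n - 1)" using mono[of 0 "n - 1"] assms(1,2) by fastforce
  then show "M + b' (n - 1) - a' 0 = M + b (n - 1) - a 0" unfolding a'_def b'_def by simp
qed

lemma reflected_specification_instance:
  assumes GX: "\<forall>x\<in>X. G x \<subseteq> X" and Gne: "\<forall>x\<in>X. G x \<noteq> {}"
    and HG: "\<forall>x\<in>X. H x = {y\<in>X. x \<in> G y}"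
    and inst: "specification_instance X H M n a b orb P"
  obtains orb' where
    "specification_instance X G M n
       (\<lambda>i. b (n - 1) - b (n - 1 - i)) (\<lambda>i. b (n - 1) - a (n - 1 - i)) orb' P"
    and "\<And>i j. j \<le> b (n - 1) \<Longrightarrow> orb' i j = orb (n - 1 - i) (b (n - 1) - j)"
proof -
  define B where "B = b (n - 1)"
  have n: "n \<ge> 1" and orb: "\<forall>i<n. orb i 0 \<in> X \<and> is_orbit H (orb i 0) (orb i)"
    and ab: "\<forall>i<n. a i \<le> b i"
    and sep: "\<forall>i. Suc i < n \<longrightarrow> b i < a (Suc i) \<and> a (Suc i) - b i > M"
    and P: "P > M + b (n - 1) - a 0"
    using inst unfolding specification_instance_def by blast+
  have "\<exists>ys. is_orbit G (ys 0) ys \<and> (\<forall>j\<le>B. ys j = orb (n - 1 - i) (B - j))" for i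
  proof (rule reversed_segment_extends_to_orbit[OF GX Gne])
    have "n - 1 - i < n" using n by simp
    then show "orb (n - 1 - i) 0 \<in> X" "\<forall>k<B. orb (n - 1 - i) k \<in> G (orb (n - 1 - i) (Suc k))"
      using orb inverse_orbit_step[OF HG] by blast+
  qed
  then obtain orb' where orb': "\<And>i. is_orbit G (orb' i 0) (orb' i)"
    and orb'_eq: "\<And>i j. j \<le> B \<Longrightarrow> orb' i j = orb (n - 1 - i) (B - j)"
    by metis
  have HX: "\<forall>x\<in>X. H x \<subseteq> X" using HG by auto
  have "orb' i 0 \<in> X" for i
  proof -
    have "n - 1 - i < n" using n by simp
    then have "orb (n - 1 - i) B \<in> X" using orbit_in[OF HX] orb by blast
    then show ?thesis using orb'_eq[of 0 i] by simp
  qed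
  with orb' reflected_intervals[OF n ab sep refl refl] n P
  have "specification_instance X G M n
      (\<lambda>i. b (n - 1) - b (n - 1 - i)) (\<lambda>i. b (n - 1) - a (n - 1 - i)) orb' P"
    unfolding specification_instance_def by simp
  with orb'_eq show thesis using that unfolding B_def by blast
qed

lemma reflected_periodic_shadow:
  assumes GX: "\<forall>x\<in>X. G x \<subseteq> X" and HG: "\<forall>x\<in>X. H x = {y\<in>X. x \<in> G y}"
    and inst: "specification_instance X H M n a b orb P"
    and orb'_eq: "\<And>i j. j \<le> b (n - 1) \<Longrightarrow> orb' i j = orb (n - 1 - i) (b (n - 1) - j)"
    and shadow: "periodic_shadow X G \<epsilon> n
       (\<lambda>i. b (n - 1) - b (n - 1 - i)) (\<lambda>i. b (n - 1) - a (n - 1 - i)) orb' P"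
  shows "periodic_shadow X H \<epsilon> n a b orb P"
proof -
  define B where "B = b (n - 1)"
  have n: "n \<ge> 1" and ab: "\<forall>i<n. a i \<le> b i"
    and sep: "\<forall>i. Suc i < n \<longrightarrow> b i < a (Suc i)" and P: "P > M + B - a 0"
    using inst unfolding specification_instance_def B_def by blast+
  obtain z zs where z: "z \<in> X" "is_orbit G z zs" "zs P = z" and close:
    "\<forall>i<n. \<forall>j. B - b (n - 1 - i) \<le> j \<and> j \<le> B - a (n - 1 - i) \<longrightarrow> dist (zs j) (orb' i j) < \<epsilon>"
    using shadow unfolding periodic_shadow_def B_def by blast
  have "P > 0" using P by simp
  define u where "u j = zs (nat ((int B - int j) mod int P))" for j
  note u = periodic_orbit_reverse[OF GX HG z \<open>P > 0\<close>, where B = B, folded u_def]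
  have "dist (u j) (orb i j) < \<epsilon>" if "i < n" "a i \<le> j" "j \<le> b i" for i j
  proof -
    have "a 0 \<le> a i" "b i \<le> B"
      using separated_intervals_mono[OF ab sep, of 0 i]
        separated_intervals_mono[OF ab sep, of i "n - 1"] that(1)
      unfolding B_def by auto
    then have "B - j < P" "j \<le> B" using P that by auto
    then have "u j = zs (B - j)" "orb' (n - 1 - i) (B - j) = orb i j"
      using u(4) orb'_eq \<open>i < n\<close> unfolding B_def by auto
    moreover have "B - b (n - 1 - (n - 1 - i)) \<le> B - j \<and> B - j \<le> B - a (n - 1 - (n - 1 - i))"
      using that \<open>j \<le> B\<close> by auto
    moreover have "n - 1 - i < n" using n by simp
    ultimately show ?thesis using close by metis
  qed
  then show ?thesis unfolding periodic_shadow_def using u(1-3) by blast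
qed

lemma has_specification_reverse:
  assumes GX: "\<forall>x\<in>X. G x \<subseteq> X" and Gne: "\<forall>x\<in>X. G x \<noteq> {}"
    and HG: "\<forall>x\<in>X. H x = {y\<in>X. x \<in> G y}"
    and spec: "has_specification X G"
  shows "has_specification X H"
  unfolding has_specification_iff
proof (intro allI impI)
  fix \<epsilon> :: real assume "\<epsilon> > 0"
  with spec obtain M where M: "\<forall>n a b orb P. specification_instance X G M n a b orb P
      \<longrightarrow> periodic_shadow X G \<epsilon> n a b orb P"
    unfolding has_specification_iff by blast
  have "periodic_shadow X H \<epsilon> n a b orb P" if inst: "specification_instance X H M n a b orb P"
    for n a b orb P
  proof -
    obtain orb' where "specification_instance X G M n
        (\<lambda>i. b (n - 1) - b (n - 1 - i)) (\<lambda>i. b (n - 1) - a (n - 1 - i)) orb' P"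
      and "\<And>i j. j \<le> b (n - 1) \<Longrightarrow> orb' i j = orb (n - 1 - i) (b (n - 1) - j)"
      using reflected_specification_instance[OF GX Gne HG inst] by blast
    with M show ?thesis using reflected_periodic_shadow[OF GX HG inst] by blast
  qed
  then show "\<exists>M. \<forall>n a b orb P. specification_instance X H M n a b orb P
      \<longrightarrow> periodic_shadow X H \<epsilon> n a b orb P" by blast
qed

theorem theorem9:
  fixes X :: "'a::metric_space set" and F :: "'a \<Rightarrow> 'a set"
  assumes "compact X"
    and "set_valued_map X F"
    and "\<forall>y\<in>X. \<exists>x\<in>X. y \<in> F x"
  shows "has_specification X F \<longleftrightarrow> has_specification X (inv_map X F)"
  \<comment> \<open>Compactness, closed values and upper semicontinuity are not needed.\<close>
proof
  have FX: "\<forall>x\<in>X. F x \<subseteq> X" and Fne: "\<forall>x\<in>X. F x \<noteq> {}"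
    using assms(2) unfolding set_valued_map_def by auto
  have inv_X: "\<forall>x\<in>X. inv_map X F x \<subseteq> X" and inv_ne: "\<forall>x\<in>X. inv_map X F x \<noteq> {}"
    using assms(3) unfolding inv_map_def by auto
  have inv_inv: "\<forall>x\<in>X. F x = {y\<in>X. x \<in> inv_map X F y}"
    using FX unfolding inv_map_def by auto
  show "has_specification X F \<Longrightarrow> has_specification X (inv_map X F)"
    using has_specification_reverse[OF FX Fne] by (simp add: inv_map_def)
  show "has_specification X (inv_map X F) \<Longrightarrow> has_specification X F"
    using has_specification_reverse[OF inv_X inv_ne inv_inv] .
qed

end
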